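(* Let $\mathscr{U}$ be a bounded monomial polyhedron, and let $B,C\in M_n(\mathbb{Q})$ be two matrices that both define $\mathscr{U}$ as a monomial polyhedron. Then $\max_{1\le k\le n}\mathsf{h}(B^{-1}e_k)=\max_{1\le k\le n}\mathsf{h}(C^{-1}e_k)$; i.e. the complexity $\kappa(\mathscr{U})$ depends only on $\mathscr{U}$.
   Context: A monomial polyhedron defined by $B\in M_n(\mathbb{Q})$ with rows $b^j$ is $\{z\in\mathbb{C}^n: \prod_{k}|z_k|^{b^j_k}<1 \text{ for all } j\}$, excluding points where some product is undefined due to division by zero. Bounded monomial polyhedra have invertible defining matrices. For $x\in\mathbb{Q}^n\setminus\{0\}$, $\mathsf{h}(x)=\sum_j|y_j|$ where $y\in\mathbb{Z}^n$ is a nonzero rational multiple of $x$ with $\gcd(y_1,\dots,y_n)=1$. $e_k$ is the $k$-th standard basis column vector. *)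

theory Defs
  imports "HOL-Analysis.Analysis"
begin

text \<open>Factor |z_k|^b of a monomial; a zero exponent gives the factor 1
  (so that 0^0 = 1, unlike Isabelle's powr).\<close>
definition mono_factor :: "complex \<Rightarrow> rat \<Rightarrow> real" where
  "mono_factor w b = (if b = 0 then 1 else norm w powr real_of_rat b)"

text \<open>The monomial polyhedron defined by B (rows B $ j): points z where every
  product prod_k |z_k|^(b^j_k) is defined (no zero coordinate raised to a
  negative exponent) and is < 1.\<close>
definition monomial_polyhedron :: "rat^'n^'n \<Rightarrow> (complex^'n) set" where
  "monomial_polyhedron B =
     {z. \<forall>j. (\<forall>k. B $ j $ k < 0 \<longrightarrow> z $ k \<noteq> 0) \<and>
             (\<Prod>k\<in>UNIV. mono_factor (z $ k) (B $ j $ k)) < 1}"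

definition defines_monomial_polyhedron :: "rat^'n^'n \<Rightarrow> (complex^'n) set \<Rightarrow> bool" where
  "defines_monomial_polyhedron B U \<longleftrightarrow> U = monomial_polyhedron B"

definition primitive_multiple :: "rat^'n \<Rightarrow> int^'n \<Rightarrow> bool" where
  "primitive_multiple x y \<longleftrightarrow>
     (\<exists>c::rat. c \<noteq> 0 \<and> (\<forall>j. of_int (y $ j) = c * x $ j)) \<and> Gcd (range (\<lambda>j. y $ j)) = 1"

definition height :: "rat^'n \<Rightarrow> int" where
  "height x = (\<Sum>j\<in>UNIV. \<bar>(SOME y. primitive_multiple x y) $ j\<bar>)"

definition complexity_wrt :: "rat^'n^'n \<Rightarrow> int" where
  "complexity_wrt B = Max (range (\<lambda>k. height (matrix_inv B *v axis k 1)))"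

end

theory Submission
  imports Defs
begin

text \<open>Writing \<open>|z\<^sub>k| = exp x\<^sub>k\<close>, the points of a monomial polyhedron with positive real
  coordinates correspond to the open polyhedral cone \<open>{x. B x < 0}\<close>, which is therefore
  the same for two defining matrices \<open>B\<close> and \<open>C\<close>; it is nonempty when \<open>U\<close> is, and boundedness
  of \<open>U\<close> makes \<open>B\<close> invertible. Equal nonempty open cones force \<open>C y \<ge> 0 \<longleftrightarrow> B y \<ge> 0\<close>, so
  \<open>B C\<^sup>-\<^sup>1\<close> is a nonnegative matrix with nonnegative inverse, i.e. a monomial matrix. Hence
  every column of \<open>C\<^sup>-\<^sup>1\<close> is a nonzero multiple of a column of \<open>B\<^sup>-\<^sup>1\<close>, and \<open>h\<close> is invariant
  under scaling.\<close>

definition real_matrix :: "rat^'n^'m \<Rightarrow> real^'n^'m" where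
  "real_matrix B = (\<chi> i j. real_of_rat (B $ i $ j))"

definition real_vec :: "rat^'n \<Rightarrow> real^'n" where
  "real_vec y = (\<chi> k. real_of_rat (y $ k))"

definition neg_cone :: "real^'n^'m \<Rightarrow> (real^'n) set" where
  "neg_cone M = {x. \<forall>j. (M *v x) $ j < 0}"

definition exp_point :: "real^'n \<Rightarrow> complex^'n" where
  "exp_point x = (\<chi> k. complex_of_real (exp (x $ k)))"

lemma real_matrix_vector_mult: "real_matrix B *v real_vec y = real_vec (B *v y)"
  by (simp add: vec_eq_iff real_matrix_def real_vec_def matrix_vector_mult_def of_rat_sum of_rat_mult)

lemma matrix_vector_mult_axis: "(A *v axis k 1) $ i = (A $ i $ k :: 'a::semiring_1)"
  by (simp add: matrix_vector_mult_def axis_def if_distrib cong: if_cong)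

lemma matrix_inv_cancel:
  fixes A :: "'a::semiring_1^'n^'n"
  assumes "invertible A"
  shows "A ** matrix_inv A = mat 1" and "matrix_inv A ** A = mat 1"
proof -
  have "A ** matrix_inv A = mat 1 \<and> matrix_inv A ** A = mat 1"
    using assms unfolding invertible_def matrix_inv_def by (rule someI_ex)
  then show "A ** matrix_inv A = mat 1" "matrix_inv A ** A = mat 1" by auto
qed

lemma mono_factor_exp: "mono_factor (complex_of_real (exp a)) b = exp (real_of_rat b * a)"
  by (simp add: mono_factor_def powr_def mult.commute)

lemma exp_point_in_monomial_polyhedron_iff:
  "exp_point x \<in> monomial_polyhedron B \<longleftrightarrow> x \<in> neg_cone (real_matrix B)"
proof -
  have "(\<Prod>k\<in>UNIV. mono_factor (exp_point x $ k) (B $ j $ k))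
      = exp ((real_matrix B *v x) $ j)" for j
    by (simp add: exp_point_def real_matrix_def matrix_vector_mult_def mono_factor_exp exp_sum)
  then show ?thesis
    by (simp add: monomial_polyhedron_def neg_cone_def exp_point_def)
qed

lemma eventually_affine_neg_at_top:
  fixes a s :: real
  assumes "0 \<le> s" and "s = 0 \<Longrightarrow> a < 0"
  shows "eventually (\<lambda>T. a - T * s < 0) at_top"
proof (cases "s = 0")
  case False
  with assms(1) have "0 < s" by simp
  show ?thesis
    using eventually_gt_at_top[of "a / s"]
    by eventually_elim (use \<open>0 < s\<close> in \<open>simp add: field_simps\<close>)
qed (use assms in simp)

text \<open>Coordinates with \<open>z\<^sub>k = 0\<close> carry only nonnegative exponents; replacing their
  logarithm \<open>-\<infinity>\<close> by a large \<open>-T\<close> makes every row negative.\<close>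
lemma neg_cone_nonempty:
  assumes z: "z \<in> monomial_polyhedron B"
  shows "neg_cone (real_matrix B) \<noteq> {}"
proof -
  define a where "a j = (\<Sum>k\<in>UNIV. if z$k = 0 then 0 else real_of_rat (B$j$k) * ln (norm (z$k)))" for j
  define s where "s j = (\<Sum>k\<in>UNIV. if z$k = 0 then real_of_rat (B$j$k) else 0)" for j
  define x where "x T = (\<chi> k. if z$k = 0 then - T else ln (norm (z$k)))" for T
  have nonneg: "z$k = 0 \<Longrightarrow> 0 \<le> B$j$k" for j k
    using z unfolding monomial_polyhedron_def by (metis (mono_tags, lifting) mem_Collect_eq not_less)
  have prod_lt: "(\<Prod>k\<in>UNIV. mono_factor (z $ k) (B $ j $ k)) < 1" for j
    using z by (simp add: monomial_polyhedron_def)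
  have row: "(real_matrix B *v x T) $ j = a j - T * s j" for j T
    by (simp add: real_matrix_def matrix_vector_mult_def x_def a_def s_def if_distrib
        sum_distrib_left mult.commute flip: sum_subtractf cong: if_cong)
  have s_nonneg: "0 \<le> s j" for j
    unfolding s_def by (rule sum_nonneg) (simp add: nonneg)
  have "a j < 0" if "s j = 0" for j
  proof -
    have "\<forall>k\<in>UNIV. (if z$k = 0 then real_of_rat (B$j$k) else 0) = 0"
      using \<open>s j = 0\<close> unfolding s_def by (subst (asm) sum_nonneg_eq_0_iff) (auto simp: nonneg)
    then have vanish: "z$k = 0 \<Longrightarrow> B$j$k = 0" for k
      by (metis UNIV_I of_rat_eq_0_iff)
    have "(\<Prod>k\<in>UNIV. mono_factor (z $ k) (B $ j $ k))
        = (\<Prod>k\<in>UNIV. exp (if z$k = 0 then 0 else real_of_rat (B$j$k) * ln (norm (z$k))))"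
      by (rule prod.cong) (auto simp: vanish mono_factor_def powr_def mult.commute)
    also have "\<dots> = exp (a j)" by (simp add: a_def exp_sum)
    finally show ?thesis using prod_lt[of j] by simp
  qed
  then have "eventually (\<lambda>T. \<forall>j. a j - T * s j < 0) at_top"
    by (intro eventually_all_finite eventually_affine_neg_at_top s_nonneg)
  then obtain T where "\<forall>j. a j - T * s j < 0"
    unfolding eventually_at_top_linorder by blast
  then have "x T \<in> neg_cone (real_matrix B)" by (simp add: neg_cone_def row)
  then show ?thesis by blast
qed

text \<open>A kernel vector \<open>v\<close> of \<open>B\<close> is a direction of the cone, and moving along it makes some
  \<open>|z\<^sub>k| = exp x\<^sub>k\<close> arbitrarily large.\<close>
lemma invertible_if_bounded_monomial_polyhedron:
  fixes B :: "rat^'n^'n"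
  assumes bounded: "bounded (monomial_polyhedron B)"
    and x0: "x0 \<in> neg_cone (real_matrix B)"
  shows "invertible B"
proof -
  obtain r where r: "\<And>z. z \<in> monomial_polyhedron B \<Longrightarrow> norm z \<le> r"
    using bounded unfolding bounded_iff by blast
  have ker: "v = 0" if "B *v v = 0" for v
  proof (rule ccontr)
    assume "v \<noteq> 0"
    then obtain k where vk: "v$k \<noteq> 0" by (metis vec_eq_iff zero_index)
    define t where "t = (ln (\<bar>r\<bar> + 1) - x0$k) / real_of_rat (v$k)"
    define x where "x = x0 + t *\<^sub>R real_vec v"
    have "real_matrix B *v real_vec v = 0"
      using real_matrix_vector_mult[of B v] \<open>B *v v = 0\<close> by (simp add: real_vec_def vec_eq_iff)
    then have "real_matrix B *v x = real_matrix B *v x0"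
      unfolding x_def matrix_vector_right_distrib matrix_vector_mult_scaleR by simp
    then have "x \<in> neg_cone (real_matrix B)"
      using x0 by (simp add: neg_cone_def)
    then have "norm (exp_point x) \<le> r"
      using r exp_point_in_monomial_polyhedron_iff by blast
    moreover have "norm (exp_point x $ k) = \<bar>r\<bar> + 1"
    proof -
      have "x $ k = ln (\<bar>r\<bar> + 1)"
        using vk by (simp add: x_def t_def real_vec_def)
      then show ?thesis by (simp add: exp_point_def)
    qed
    ultimately show False
      using Finite_Cartesian_Product.norm_nth_le[of "exp_point x" k] by linarith
  qed
  then have "\<exists>B'. B' ** B = mat 1"
    unfolding matrix_left_invertible_ker by blast
  then obtain B' where B': "B' ** B = mat 1" ..
  moreover have "B ** B' = mat 1"
    using B' matrix_left_right_inverse[of B B'] by simp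
  ultimately show ?thesis
    unfolding invertible_def by blast
qed

text \<open>If \<open>(M y)\<^sub>j < 0\<close>, the point \<open>t x\<^sub>0 - y\<close> with small \<open>t > 0\<close> would lie in the cone of \<open>N\<close>
  but not in that of \<open>M\<close>.\<close>
lemma nonneg_image_if_neg_cone_eq:
  fixes M N :: "real^'n^'m"
  assumes eq: "neg_cone M = neg_cone N" and x0: "x0 \<in> neg_cone M"
    and Ny: "\<And>i. 0 \<le> (N *v y) $ i"
  shows "0 \<le> (M *v y) $ j"
proof (rule ccontr)
  assume "\<not> 0 \<le> (M *v y) $ j"
  then have My: "(M *v y) $ j < 0" by simp
  have Mx0: "(M *v x0) $ j < 0" using x0 by (simp add: neg_cone_def)
  define t where "t = (M *v y) $ j / (2 * (M *v x0) $ j)"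
  have "0 < t" using My Mx0 by (simp add: t_def divide_neg_neg)
  have "(N *v (t *\<^sub>R x0 - y)) $ i < 0" for i
  proof -
    have "(N *v x0) $ i < 0" using x0 unfolding eq by (simp add: neg_cone_def)
    then have "t * (N *v x0) $ i < 0" using \<open>0 < t\<close> by (simp add: mult_pos_neg)
    then show ?thesis using Ny[of i] by (simp add: algebra_simps)
  qed
  then have "t *\<^sub>R x0 - y \<in> neg_cone M" unfolding eq by (simp add: neg_cone_def)
  then have "t * (M *v x0) $ j - (M *v y) $ j < 0" by (simp add: neg_cone_def algebra_simps)
  moreover have "t * (M *v x0) $ j = (M *v y) $ j / 2" using Mx0 by (simp add: t_def)
  ultimately show False using My by simp
qed

lemma rat_nonneg_image_if_neg_cone_eq:
  fixes B C :: "rat^'n^'n"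
  assumes "neg_cone (real_matrix B) = neg_cone (real_matrix C)"
    and "x0 \<in> neg_cone (real_matrix B)" and "\<And>i. 0 \<le> (C *v y) $ i"
  shows "0 \<le> (B *v y) $ j"
proof -
  have "0 \<le> (real_matrix C *v real_vec y) $ i" for i
    using assms(3)[of i] real_matrix_vector_mult[of C y] by (simp add: real_vec_def)
  then have "0 \<le> (real_matrix B *v real_vec y) $ j"
    by (rule nonneg_image_if_neg_cone_eq[OF assms(1,2)])
  then show ?thesis using real_matrix_vector_mult[of B y] by (simp add: real_vec_def)
qed

lemma nonneg_inverse_column_single_nonzero:
  fixes M N :: "'a::linordered_idom^'n^'n"
  assumes M0: "\<And>i k. 0 \<le> M$i$k" and N0: "\<And>i k. 0 \<le> N$i$k"
    and MN: "M ** N = mat 1" and NM: "N ** M = mat 1"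
  obtains i where "M$i$k \<noteq> 0" and "\<And>i'. i' \<noteq> i \<Longrightarrow> M$i'$k = 0"
proof -
  have diag: "(\<Sum>l\<in>UNIV. N$k$l * M$l$k) = 1"
    using arg_cong[OF NM, of "\<lambda>A. A$k$k"] by (simp add: matrix_matrix_mult_def mat_def)
  obtain i where i: "M$i$k \<noteq> 0"
    using diag by (metis (no_types, lifting) mult_zero_right sum.neutral zero_neq_one)
  obtain l where l: "N$k$l \<noteq> 0"
    using diag by (metis (no_types, lifting) mult_zero_left sum.neutral zero_neq_one)
  have only_l: "i' = l" if "M$i'$k \<noteq> 0" for i'
  proof (rule ccontr)
    assume "i' \<noteq> l"
    then have "(\<Sum>m\<in>UNIV. M$i'$m * N$m$l) = 0"
      using arg_cong[OF MN, of "\<lambda>A. A$i'$l"] by (simp add: matrix_matrix_mult_def mat_def)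
    moreover have "M$i'$k * N$k$l \<le> (\<Sum>m\<in>UNIV. M$i'$m * N$m$l)"
      by (rule member_le_sum) (auto simp: M0 N0)
    moreover have "0 < M$i'$k * N$k$l"
      using that l M0[of i' k] N0[of k l] by (simp add: order_le_neq_trans)
    ultimately show False by simp
  qed
  show thesis
  proof (rule that[OF i])
    fix i' assume "i' \<noteq> i"
    then show "M$i'$k = 0" using only_l[of i] only_l[of i'] i by blast
  qed
qed

lemma nonneg_matrix_mult_inv_if_orthant_preimage:
  fixes P Q :: "'a::linordered_field^'n^'n"
  assumes "invertible Q"
    and "\<And>y. \<forall>j. 0 \<le> (Q *v y) $ j \<Longrightarrow> \<forall>j. 0 \<le> (P *v y) $ j"
  shows "0 \<le> (P ** matrix_inv Q) $ i $ l"
proof -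
  have "Q *v (matrix_inv Q *v axis l 1) = axis l 1"
    by (simp add: matrix_vector_mul_assoc matrix_inv_cancel[OF assms(1)])
  then have "\<forall>j. 0 \<le> (P *v (matrix_inv Q *v axis l 1)) $ j"
    using assms(2) by (simp add: axis_def)
  then show ?thesis by (simp add: matrix_vector_mul_assoc matrix_vector_mult_axis)
qed

text \<open>\<open>M = B C\<^sup>-\<^sup>1\<close> and its inverse \<open>C B\<^sup>-\<^sup>1\<close> are nonnegative, so \<open>M\<close> is a monomial
  matrix, and \<open>C\<^sup>-\<^sup>1 = B\<^sup>-\<^sup>1 M\<close>.\<close>
lemma matrix_inv_column_proportional:
  fixes B C :: "'a::linordered_field^'n^'n"
  assumes iB: "invertible B" and iC: "invertible C"
    and same_orthant: "\<And>y. (\<forall>j. 0 \<le> (C *v y) $ j) \<longleftrightarrow> (\<forall>j. 0 \<le> (B *v y) $ j)"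
  obtains i c where "c \<noteq> 0" and "matrix_inv C *v axis k 1 = c *s (matrix_inv B *v axis i 1)"
proof -
  note B1 = matrix_inv_cancel[OF iB] and C1 = matrix_inv_cancel[OF iC]
  define M where "M = B ** matrix_inv C"
  define N where "N = C ** matrix_inv B"
  have M0: "0 \<le> M$i$l" and N0: "0 \<le> N$i$l" for i l
    unfolding M_def N_def
    by (intro nonneg_matrix_mult_inv_if_orthant_preimage iB iC; simp add: same_orthant)+
  have "M ** N = B ** ((matrix_inv C ** C) ** matrix_inv B)"
    and "N ** M = C ** ((matrix_inv B ** B) ** matrix_inv C)"
    by (simp_all add: M_def N_def matrix_mul_assoc)
  then have "M ** N = mat 1" and "N ** M = mat 1"
    using B1 C1 by simp_all
  then obtain i where "M$i$k \<noteq> 0" and others: "\<And>i'. i' \<noteq> i \<Longrightarrow> M$i'$k = 0"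
    by (rule nonneg_inverse_column_single_nonzero[OF M0 N0]) blast
  have "matrix_inv B ** M = (matrix_inv B ** B) ** matrix_inv C"
    by (simp add: M_def matrix_mul_assoc)
  then have "matrix_inv B ** M = matrix_inv C"
    using B1 by simp
  then have "matrix_inv C *v axis k 1 = matrix_inv B *v (M *v axis k 1)"
    by (simp add: matrix_vector_mul_assoc)
  moreover have "M *v axis k 1 = M$i$k *s axis i 1"
    unfolding vec_eq_iff matrix_vector_mult_axis using others by (auto simp: axis_def)
  ultimately show thesis
    using that \<open>M$i$k \<noteq> 0\<close> by (simp add: vector_scalar_commute)
qed

lemma height_scalar_mult:
  assumes "c \<noteq> 0"
  shows "height (c *s x) = height x"
proof -
  have "primitive_multiple (c *s x) = primitive_multiple x"
  proof (intro ext iffI)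
    fix y assume "primitive_multiple (c *s x) y"
    then obtain d where "d \<noteq> 0" "\<forall>j. of_int (y $ j) = d * (c * x $ j)" "Gcd (range (\<lambda>j. y $ j)) = 1"
      unfolding primitive_multiple_def by auto
    then show "primitive_multiple x y"
      unfolding primitive_multiple_def using assms by (intro conjI exI[of _ "d * c"]) auto
  next
    fix y assume "primitive_multiple x y"
    then obtain d where "d \<noteq> 0" "\<forall>j. of_int (y $ j) = d * x $ j" "Gcd (range (\<lambda>j. y $ j)) = 1"
      unfolding primitive_multiple_def by blast
    then show "primitive_multiple (c *s x) y"
      unfolding primitive_multiple_def using assms by (intro conjI exI[of _ "d / c"]) auto
  qed
  then show ?thesis unfolding height_def by simp
qed

lemma column_heights_subset:
  fixes B C :: "rat^'n^'n"
  assumes "invertible B" and "invertible C"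
    and "\<And>y. (\<forall>j. 0 \<le> (C *v y) $ j) \<longleftrightarrow> (\<forall>j. 0 \<le> (B *v y) $ j)"
  shows "range (\<lambda>k. height (matrix_inv C *v axis k 1))
           \<subseteq> range (\<lambda>k. height (matrix_inv B *v axis k 1))"
proof clarify
  fix k
  obtain i c where "c \<noteq> 0" "matrix_inv C *v axis k 1 = c *s (matrix_inv B *v axis i 1)"
    using matrix_inv_column_proportional[OF assms] .
  then show "height (matrix_inv C *v axis k 1) \<in> range (\<lambda>k. height (matrix_inv B *v axis k 1))"
    using height_scalar_mult by auto
qed

theorem proposition3p3:
  fixes B C :: "rat^'n^'n" and U :: "(complex^'n) set"
  assumes "bounded U" and "U \<noteq> {}"
    and "defines_monomial_polyhedron B U"
    and "defines_monomial_polyhedron C U"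
  shows "Max (range (\<lambda>k. height (matrix_inv B *v axis k 1)))
       = Max (range (\<lambda>k. height (matrix_inv C *v axis k 1)))"
proof -
  have UB: "U = monomial_polyhedron B" and UC: "U = monomial_polyhedron C"
    using assms(3,4) unfolding defines_monomial_polyhedron_def by auto
  have cone: "neg_cone (real_matrix B) = neg_cone (real_matrix C)"
    using UB UC exp_point_in_monomial_polyhedron_iff by blast
  obtain x0 where x0: "x0 \<in> neg_cone (real_matrix B)"
    using neg_cone_nonempty assms(2) UB by blast
  have "invertible B" "invertible C"
    using invertible_if_bounded_monomial_polyhedron assms(1) UB UC x0 cone by metis+
  moreover have "(\<forall>j. 0 \<le> (C *v y) $ j) \<longleftrightarrow> (\<forall>j. 0 \<le> (B *v y) $ j)" for y
    using rat_nonneg_image_if_neg_cone_eq cone x0 by metis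
  ultimately show ?thesis
    using column_heights_subset by (metis subset_antisym)
qed

end
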